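(* Let $q=2^t$. For any choice of the set $Y$, every $\chi_\ell$ with $\ell\in L\setminus\{\ell_0\}$, as well as the constant function $\mathbf{1}$ on $P$, lies in the $\mathbb{F}_2$-span of $\{\chi_\ell:\ell\in X_0\cup Y\cup L_1\}$.
   Context: Let $q$ be a prime power and $V$ a $4$-dimensional vector space over $\mathbb{F}_q$ with a nonsingular alternating bilinear form and symplectic basis $e_0,e_1,e_2,e_3$ with $(e_0,e_3)=(e_1,e_2)=1$. $P$ is the set of $1$-dimensional subspaces of $V$ (points), $L$ the set of totally isotropic $2$-dimensional subspaces (lines). $p_0=\langle e_0\rangle$, $\ell_0=\langle e_0,e_1\rangle$, $L_1$ is the set of lines sharing no point with $\ell_0$. $\mathbb{F}_2[P]$ is the space of functions $P\to\mathbb{F}_2$, $\chi_\ell$ the characteristic function of the point set of a line $\ell$. $X$ is the set of the $q+1$ lines through $p_0$, and $X_0=X\setminus\{\ell_0\}$. $Y$ is any set of $q$ lines, each different from $\ell_0$ and meeting $\ell_0$ in a point other than $p_0$, such that distinct lines of $Y$ meet $\ell_0$ in distinct points (so $Y$ contains exactly one line through each point of $\ell_0\setminus\{p_0\}$). *)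

theory Defs
  imports Main "HOL-Library.Z2"
begin

text \<open>The symplectic space V = F_q^4, vectors as functions nat => 'a supported on {0..3}.\<close>

definition Vec :: "(nat \<Rightarrow> 'a::field) set" where
  "Vec = {v. \<forall>i\<ge>4. v i = 0}"

definition symp :: "(nat \<Rightarrow> 'a::field) \<Rightarrow> (nat \<Rightarrow> 'a) \<Rightarrow> 'a" where
  "symp x y = x 0 * y 3 - x 3 * y 0 + x 1 * y 2 - x 2 * y 1"

definition ebas :: "nat \<Rightarrow> nat \<Rightarrow> 'a::field" where
  "ebas i = (\<lambda>j. if j = i then 1 else 0)"

definition span1 :: "(nat \<Rightarrow> 'a::field) \<Rightarrow> (nat \<Rightarrow> 'a) set" where
  "span1 v = {(\<lambda>i. c * v i) | c. True}"

definition span2 :: "(nat \<Rightarrow> 'a::field) \<Rightarrow> (nat \<Rightarrow> 'a) \<Rightarrow> (nat \<Rightarrow> 'a) set" where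
  "span2 u w = {(\<lambda>i. a * u i + b * w i) | a b. True}"

definition lin_indep2 :: "(nat \<Rightarrow> 'a::field) \<Rightarrow> (nat \<Rightarrow> 'a) \<Rightarrow> bool" where
  "lin_indep2 u w \<longleftrightarrow> (\<forall>a b. (\<forall>i. a * u i + b * w i = 0) \<longrightarrow> a = 0 \<and> b = 0)"

definition Pts :: "(nat \<Rightarrow> 'a::field) set set" where
  "Pts = {span1 v | v. v \<in> Vec \<and> (\<exists>i. v i \<noteq> 0)}"

definition Lns :: "(nat \<Rightarrow> 'a::field) set set" where
  "Lns = {span2 u w | u w. u \<in> Vec \<and> w \<in> Vec \<and> lin_indep2 u w \<and>
     symp u u = 0 \<and> symp u w = 0 \<and> symp w w = 0}"

definition p0 :: "(nat \<Rightarrow> 'a::field) set" where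
  "p0 = span1 (ebas 0)"

definition l0 :: "(nat \<Rightarrow> 'a::field) set" where
  "l0 = span2 (ebas 0) (ebas 1)"

definition L1 :: "(nat \<Rightarrow> 'a::field) set set" where
  "L1 = {l \<in> Lns. \<not> (\<exists>p\<in>Pts. p \<subseteq> l \<and> p \<subseteq> l0)}"

definition Xl :: "(nat \<Rightarrow> 'a::field) set set" where
  "Xl = {l \<in> Lns. p0 \<subseteq> l}"

definition X0 :: "(nat \<Rightarrow> 'a::field) set set" where
  "X0 = Xl - {l0}"

definition is_Y :: "(nat \<Rightarrow> 'a::{field,finite}) set set \<Rightarrow> bool" where
  "is_Y Y \<longleftrightarrow> Y \<subseteq> Lns \<and> card Y = card (UNIV :: 'a set) \<and>
     (\<forall>l\<in>Y. l \<noteq> l0 \<and> l \<inter> l0 \<in> Pts \<and> l \<inter> l0 \<noteq> p0) \<and>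
     inj_on (\<lambda>l. l \<inter> l0) Y"

definition chi :: "(nat \<Rightarrow> 'a::field) set \<Rightarrow> (nat \<Rightarrow> 'a) set \<Rightarrow> bit" where
  "chi l p = (if p \<subseteq> l then 1 else 0)"

definition in_F2_span :: "((nat \<Rightarrow> 'a::field) set \<Rightarrow> bit) \<Rightarrow> (nat \<Rightarrow> 'a) set set \<Rightarrow> bool" where
  "in_F2_span f S \<longleftrightarrow> (\<exists>c :: (nat \<Rightarrow> 'a) set \<Rightarrow> bit.
      \<forall>p\<in>Pts. f p = (\<Sum>l\<in>S. c l * chi l p))"

end

theory Submission
  imports Defs "HOL-Number_Theory.Residues"
begin

(* Write S = X0 \<union> Y \<union> L1 and work in coordinates (v0,v1,v2,v3), where
   l0 is {v2 = v3 = 0}.  Three explicit families of lines suffice: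
     Lf a b c  (lines disjoint from l0, hence in L1),
     Xf b      (the lines through p0 other than l0, i.e. X0),
     Mf a b    (the lines meeting l0 in the point <(a,1,0,0)> other than p0).
   Every line l \<noteq> l0 lies in X0, in L1, or equals some Mf a b.  Since q is even, the
   field has characteristic 2, and a parity count shows that for b \<noteq> b'
     chi (Mf a b) = chi (Mf a b') + (sum of chi over certain lines of L1),
   so chi (Mf a b) is in the span as soon as one line Mf a b' is; a counting argument
   shows that Y contains such a line for every a.  Finally, another parity count writes
   the constant function 1 as a sum of chi over lines Lf, Xf, Mf. *)

lemma char_two:
  assumes "card (UNIV :: 'a::{field,finite} set) = 2 ^ t"
  shows "(2::'a) = 0"
proof -
  have pos: "CHAR('a) > 0" by (rule finite_imp_CHAR_pos) simp
  have pr: "prime CHAR('a)" by (rule prime_CHAR_semidom[OF pos])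
  have "CHAR('a) dvd 2 ^ t" using CHAR_dvd_CARD[where 'a='a] assms by simp
  then have "CHAR('a) dvd 2" using pr prime_dvd_power by blast
  then have "CHAR('a) = 2" using pr primes_dvd_imp_eq two_is_prime_nat by blast
  then show ?thesis using of_nat_CHAR[where 'a='a] by simp
qed

lemma card_even_in_bit:
  assumes "card (UNIV :: 'a::{field,finite} set) = 2 ^ t"
  shows "of_nat (card (UNIV :: 'a set)) = (0::bit)"
proof -
  have "card {0::'a, 1} \<le> card (UNIV :: 'a set)" by (rule card_mono) auto
  then have "t \<noteq> 0" using assms by (cases t) auto
  then obtain k where "t = Suc k" by (cases t) auto
  then show ?thesis using assms by simp
qed

lemma eq_iff_sum_zero:
  assumes "(2::'a::field) = 0"
  shows "(x::'a) = y \<longleftrightarrow> x + y = 0"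
proof -
  have "y + y = 0" using assms by (metis mult_2 mult_zero_left)
  then show ?thesis by (metis add.assoc add.right_neutral add_right_cancel)
qed

definition vec4 :: "'a::field \<Rightarrow> 'a \<Rightarrow> 'a \<Rightarrow> 'a \<Rightarrow> nat \<Rightarrow> 'a" where
  "vec4 a b c d = (\<lambda>i. if i = 0 then a else if i = 1 then b else if i = 2 then c
                       else if i = 3 then d else 0)"

lemma vec4_simps [simp]:
  "vec4 a b c d 0 = a" "vec4 a b c d 1 = b" "vec4 a b c d (Suc 0) = b"
  "vec4 a b c d 2 = c" "vec4 a b c d 3 = d"
  by (auto simp: vec4_def)

lemma vec4_Vec [simp]: "vec4 a b c d \<in> Vec"
  by (simp add: Vec_def vec4_def)

lemma Vec_scale: "v \<in> Vec \<Longrightarrow> (\<lambda>i. c * v i) \<in> Vec"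
  unfolding Vec_def by simp

lemma all4: "(\<forall>i<4::nat. P i) \<longleftrightarrow> P 0 \<and> P 1 \<and> P 2 \<and> P 3"
  by (auto simp: less_Suc_eq numeral_eq_Suc)

lemma Vec_eq:
  assumes "v \<in> Vec" "u \<in> Vec" "v 0 = u 0" "v 1 = u 1" "v 2 = u 2" "v 3 = u 3"
  shows "v = u"
proof
  fix i show "v i = u i"
  proof (cases "i < 4")
    case True
    then have "i = 0 \<or> i = 1 \<or> i = 2 \<or> i = 3" by auto
    then show ?thesis using assms by auto
  next
    case False then show ?thesis using assms unfolding Vec_def by auto
  qed
qed

lemma finite_Vec: "finite (Vec :: (nat \<Rightarrow> 'a::{field,finite}) set)"
proof -
  have "Vec = {f :: nat \<Rightarrow> 'a. \<forall>x. (x \<in> {..<4} \<longrightarrow> f x \<in> UNIV) \<and> (x \<notin> {..<4} \<longrightarrow> f x = 0)}"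
    unfolding Vec_def by auto
  then show ?thesis using finite_set_of_finite_funs[of "{..<4::nat}" "UNIV :: 'a set" 0] by simp
qed

lemma finite_Lns: "finite (Lns :: (nat \<Rightarrow> 'a::{field,finite}) set set)"
proof -
  have "Lns \<subseteq> (\<lambda>(u,w). span2 u w) ` ((Vec :: (nat \<Rightarrow> 'a) set) \<times> Vec)"
    unfolding Lns_def by auto
  then show ?thesis using finite_Vec by (meson finite_SigmaI finite_imageI finite_subset)
qed

lemma mem_span2: "x \<in> span2 u w \<longleftrightarrow> (\<exists>a b. \<forall>i. x i = a * u i + b * w i)"
  unfolding span2_def by (auto simp: fun_eq_iff)

lemma in_span1: "v \<in> span1 v"
  unfolding span1_def by (rule CollectI, rule exI[of _ 1]) auto

lemma span2_gens: "u \<in> span2 u w" "w \<in> span2 u w"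
  unfolding mem_span2 by (rule exI[of _ 1], rule exI[of _ 0], simp)
    (rule exI[of _ 0], rule exI[of _ 1], simp)

lemma span2_comb:
  assumes "x \<in> span2 u w" "y \<in> span2 u w"
  shows "(\<lambda>i. c * x i + d * y i) \<in> span2 u w"
proof -
  obtain a b a' b' where x: "\<forall>i. x i = a * u i + b * w i" and y: "\<forall>i. y i = a' * u i + b' * w i"
    using assms by (auto simp: mem_span2)
  have "\<forall>i. c * x i + d * y i = (c*a + d*a') * u i + (c*b + d*b') * w i"
    using x y by (simp add: algebra_simps)
  then show ?thesis by (auto simp: mem_span2)
qed

lemma span2_sub: "u' \<in> span2 u w \<Longrightarrow> w' \<in> span2 u w \<Longrightarrow> span2 u' w' \<subseteq> span2 u w"
  using span2_comb by (fastforce simp: span2_def)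

lemma span1_sub: "span1 v \<subseteq> span2 u w \<longleftrightarrow> v \<in> span2 u w"
  using in_span1[of v] span2_comb[of v u w v _ 0] by (auto simp: span1_def)

lemma span1_scale:
  assumes "(c::'a::field) \<noteq> 0"
  shows "span1 (\<lambda>i. c * v i) = span1 v"
proof -
  have "(\<lambda>i. d * (c * v i)) = (\<lambda>i. (d * c) * v i)" for d by (simp add: mult.assoc)
  moreover have "(\<lambda>i. d * v i) = (\<lambda>i. (d / c) * (c * v i))" for d using assms by simp
  ultimately show ?thesis unfolding span1_def by blast
qed

lemma span2_eq_of_indep:
  assumes ind: "lin_indep2 x y" and xs: "x \<in> span2 u w" and ys: "y \<in> span2 u w"
  shows "span2 u w = span2 x y"
proof
  show "span2 x y \<subseteq> span2 u w" by (rule span2_sub[OF xs ys])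
  obtain a1 b1 a2 b2 where x: "\<And>i. x i = a1 * u i + b1 * w i" and y: "\<And>i. y i = a2 * u i + b2 * w i"
    using xs ys by (auto simp: mem_span2)
  define D where "D = a1 * b2 - a2 * b1"
  have u: "b2 * x i + (- b1) * y i = D * u i" and w: "(- a2) * x i + a1 * y i = D * w i" for i
    unfolding x y D_def by (simp_all add: algebra_simps)
  have indep: "a = 0 \<and> b = 0" if "\<And>i. a * x i + b * y i = 0" for a b
    using ind that unfolding lin_indep2_def by blast
  have "D \<noteq> 0"
  proof
    assume "D = 0"
    then have "b2 = 0 \<and> - b1 = 0" "- a2 = 0 \<and> a1 = 0"
      using indep[of b2 "- b1"] indep[of "- a2" a1] u w by simp_all
    then have "1 * x i + 0 * y i = 0" for i using x by simp
    then show False using indep[of 1 0] by simp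
  qed
  then have "u i = (b2 / D) * x i + (- b1 / D) * y i" "w i = (- a2 / D) * x i + (a1 / D) * y i" for i
    using u[of i] w[of i] by (simp_all add: field_simps)
  then have "u \<in> span2 x y" "w \<in> span2 x y" unfolding mem_span2 by blast+
  then show "span2 u w \<subseteq> span2 x y" by (rule span2_sub)
qed

lemma lin_indep2_unit:
  assumes "u i = 1" "w i = 0" "u j = 0" "w j = 1"
  shows "lin_indep2 u w"
  unfolding lin_indep2_def
proof (intro allI impI)
  fix a b assume "\<forall>k. a * u k + b * w k = 0"
  from this[rule_format, of i] this[rule_format, of j] show "a = 0 \<and> b = 0"
    using assms by simp
qed

lemma symp_self: "symp u u = 0"
  unfolding symp_def by (simp add: algebra_simps)

lemma symp_vanishes_on_span2:
  assumes "symp u w = 0" "x \<in> span2 u w" "y \<in> span2 u w"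
  shows "symp x y = (0::'a::field)"
proof -
  obtain a b a' b' where x: "\<forall>i. x i = a * u i + b * w i" and y: "\<forall>i. y i = a' * u i + b' * w i"
    using assms(2,3) by (auto simp: mem_span2)
  have "symp x y = a*a'*symp u u + a*b'*symp u w - b*a'*symp u w + b*b'*symp w w"
    unfolding symp_def using x y by (simp add: algebra_simps)
  then show ?thesis using assms(1) by (simp add: symp_self)
qed

lemma span2_in_Lns:
  "u \<in> Vec \<Longrightarrow> w \<in> Vec \<Longrightarrow> lin_indep2 u w \<Longrightarrow> symp u w = 0 \<Longrightarrow> span2 u w \<in> Lns"
  unfolding Lns_def by (rule CollectI, rule exI[of _ u], rule exI[of _ w]) (simp add: symp_self)

lemma Lns_Vec:
  assumes "l \<in> Lns" "x \<in> l"
  shows "x \<in> Vec"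
proof -
  obtain u w where "l = span2 u w" "u \<in> Vec" "w \<in> Vec" using assms(1) unfolding Lns_def by blast
  moreover obtain a b where "\<forall>i. x i = a * u i + b * w i"
    using assms(2) calculation(1) by (auto simp: mem_span2)
  ultimately show ?thesis unfolding Vec_def by simp
qed

lemma Vec_span_mem:
  assumes "v \<in> Vec" "u \<in> Vec" "w \<in> Vec"
  shows "v \<in> span2 u w \<longleftrightarrow> (\<exists>a b. \<forall>i<4. v i = a * u i + b * w i)"
proof -
  have "(\<forall>i<4. v i = a * u i + b * w i) \<longleftrightarrow> (\<forall>i. v i = a * u i + b * w i)" for a b
  proof (intro iffI allI)
    fix i assume "\<forall>i<4. v i = a * u i + b * w i"
    then show "v i = a * u i + b * w i" using assms by (cases "i < 4") (auto simp: Vec_def)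
  qed simp
  then show ?thesis by (simp add: mem_span2)
qed

lemma Pts_E:
  assumes "p \<in> Pts"
  obtains v where "p = span1 v" "v \<in> Vec" "v 0 \<noteq> 0 \<or> v 1 \<noteq> 0 \<or> v 2 \<noteq> 0 \<or> v 3 \<noteq> 0"
proof -
  obtain v i where v: "p = span1 v" "v \<in> Vec" "v i \<noteq> 0" using assms unfolding Pts_def by auto
  then have "i < 4" unfolding Vec_def using not_less by auto
  then have "i = 0 \<or> i = 1 \<or> i = 2 \<or> i = 3" by auto
  then show ?thesis using v that by auto
qed

lemma chi_line:
  assumes "l \<in> Lns"
  shows "chi l (span1 v) = (if v \<in> l then 1 else 0)"
proof -
  obtain u w where "l = span2 u w" using assms unfolding Lns_def by blast
  then show ?thesis unfolding chi_def by (simp add: span1_sub)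
qed

definition Lf :: "'a::field \<Rightarrow> 'a \<Rightarrow> 'a \<Rightarrow> (nat \<Rightarrow> 'a) set" where
  "Lf a b c = span2 (vec4 a b 1 0) (vec4 c a 0 1)"

definition Xf :: "'a::field \<Rightarrow> (nat \<Rightarrow> 'a) set" where
  "Xf b = span2 (vec4 1 0 0 0) (vec4 0 b 1 0)"

definition Mf :: "'a::field \<Rightarrow> 'a \<Rightarrow> (nat \<Rightarrow> 'a) set" where
  "Mf a b = span2 (vec4 a 1 0 0) (vec4 b 0 a 1)"

lemma memL: "v \<in> Vec \<Longrightarrow> v \<in> Lf a b c \<longleftrightarrow> v 0 = v 2 * a + v 3 * c \<and> v 1 = v 2 * b + v 3 * a"
  unfolding Lf_def by (simp add: Vec_span_mem all4)

lemma memX: "v \<in> Vec \<Longrightarrow> v \<in> Xf b \<longleftrightarrow> v 1 = v 2 * b \<and> v 3 = 0"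
  unfolding Xf_def by (simp add: Vec_span_mem all4)

lemma memM: "v \<in> Vec \<Longrightarrow> v \<in> Mf a b \<longleftrightarrow> v 0 = v 1 * a + v 3 * b \<and> v 2 = v 3 * a"
  unfolding Mf_def by (simp add: Vec_span_mem all4)

lemma ebas_vec4: "ebas 0 = vec4 1 0 0 0" "ebas 1 = vec4 0 1 0 0"
  by (auto simp: ebas_def vec4_def fun_eq_iff)

lemma memL0: "v \<in> Vec \<Longrightarrow> v \<in> l0 \<longleftrightarrow> v 2 = 0 \<and> v 3 = 0"
  unfolding l0_def ebas_vec4 by (simp add: Vec_span_mem all4)

lemma Lf_Lns: "Lf a b c \<in> Lns"
  unfolding Lf_def
  by (intro span2_in_Lns vec4_Vec lin_indep2_unit[where i=2 and j=3]) (simp_all add: symp_def)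

lemma Xf_Lns: "Xf b \<in> Lns"
  unfolding Xf_def
  by (intro span2_in_Lns vec4_Vec lin_indep2_unit[where i=0 and j=2]) (simp_all add: symp_def)

lemma Mf_Lns:
  assumes "(2::'a::field) = 0"
  shows "Mf (a::'a) b \<in> Lns"
proof -
  have "a + a = 0" using assms by (metis mult_2 mult_zero_left)
  then show ?thesis unfolding Mf_def
    by (intro span2_in_Lns vec4_Vec lin_indep2_unit[where i=1 and j=3]) (simp_all add: symp_def)
qed

lemma Lf_in_L1: "Lf a b c \<in> L1"
proof -
  have "\<not> (p \<subseteq> Lf a b c \<and> p \<subseteq> l0)" if "p \<in> Pts" for p
  proof
    assume p: "p \<subseteq> Lf a b c \<and> p \<subseteq> l0"
    obtain v where v: "p = span1 v" "v \<in> Vec" "v 0 \<noteq> 0 \<or> v 1 \<noteq> 0 \<or> v 2 \<noteq> 0 \<or> v 3 \<noteq> 0"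
      using \<open>p \<in> Pts\<close> by (rule Pts_E)
    have "v \<in> Lf a b c" "v \<in> l0" using p v(1) in_span1[of v] by auto
    then show False using memL[OF v(2)] memL0[OF v(2)] v(3) by auto
  qed
  then show ?thesis unfolding L1_def using Lf_Lns by blast
qed

lemma Xf_in_X0: "Xf b \<in> X0"
proof -
  have "p0 \<subseteq> Xf b"
    unfolding p0_def Xf_def span1_sub ebas_vec4 by (simp add: span2_gens)
  moreover have "vec4 0 b 1 0 \<in> Xf b" "vec4 0 b 1 0 \<notin> l0"
    by (simp_all add: memX memL0)
  ultimately show ?thesis unfolding X0_def Xl_def using Xf_Lns by auto
qed

lemma l0_point_cases:
  assumes "p \<in> Pts" "p \<subseteq> l0"
  shows "p = p0 \<or> (\<exists>a. p = span1 (vec4 a 1 0 0))"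
proof -
  obtain v where v: "p = span1 v" "v \<in> Vec" "v 0 \<noteq> 0 \<or> v 1 \<noteq> 0 \<or> v 2 \<noteq> 0 \<or> v 3 \<noteq> 0"
    using assms(1) by (rule Pts_E)
  have v23: "v 2 = 0" "v 3 = 0" using assms(2) v(1,2) in_span1[of v] memL0 by auto
  show ?thesis
  proof (cases "v 1 = 0")
    case True
    have "v = (\<lambda>i. v 0 * vec4 1 0 0 0 i)"
      by (rule Vec_eq[OF v(2) Vec_scale[OF vec4_Vec]]) (use True v23 in simp_all)
    moreover have "v 0 \<noteq> 0" using v(3) v23 True by auto
    ultimately have "p = p0" unfolding v(1) p0_def ebas_vec4 by (metis span1_scale)
    then show ?thesis ..
  next
    case False
    have "v = (\<lambda>i. v 1 * vec4 (v 0 / v 1) 1 0 0 i)"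
      by (rule Vec_eq[OF v(2) Vec_scale[OF vec4_Vec]]) (use False v23 in simp_all)
    then have "p = span1 (vec4 (v 0 / v 1) 1 0 0)" unfolding v(1) by (metis span1_scale False)
    then show ?thesis by blast
  qed
qed

text \<open>In characteristic 2, a line through <(a,1,0,0)> other than l0 is one of the Mf a b:
  the form forces its second spanning vector to be (b,0,a,1).\<close>

lemma line_through_l0_point:
  fixes a :: "'a::field"
  assumes c2: "(2::'a) = 0" and l: "l \<in> Lns" "l \<noteq> l0" and r: "vec4 a 1 0 0 \<in> l"
  shows "\<exists>b. l = Mf a b"
proof -
  obtain u w where lu: "l = span2 u w" and uV: "u \<in> Vec" and wV: "w \<in> Vec"
    and ind: "lin_indep2 u w" and iso: "symp u w = 0"
    using l(1) unfolding Lns_def by blast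
  have "\<exists>x\<in>l. x 2 \<noteq> 0 \<or> x 3 \<noteq> 0"
  proof (rule ccontr)
    assume none: "\<not> ?thesis"
    have "u \<in> l" "w \<in> l" unfolding lu by (rule span2_gens)+
    then have "u \<in> l0" "w \<in> l0" using none memL0[OF uV] memL0[OF wV] by auto
    then have "l0 = l" unfolding lu l0_def by (rule span2_eq_of_indep[OF ind])
    with l(2) show False by simp
  qed
  then obtain x where x: "x \<in> l" "x 2 \<noteq> 0 \<or> x 3 \<noteq> 0" by blast
  have "symp (vec4 a 1 0 0) x = 0" using symp_vanishes_on_span2[OF iso] r x(1) lu by simp
  then have "x 2 + a * x 3 = 0" by (simp add: symp_def add.commute)
  then have x2: "x 2 = a * x 3" using eq_iff_sum_zero[OF c2, of "x 2"] by simp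
  with x(2) have x3: "x 3 \<noteq> 0" by auto
  define b where "b = (x 0 - x 1 * a) / x 3"
  define n where "n = (\<lambda>i. (1 / x 3) * x i + (- x 1 / x 3) * vec4 a 1 0 0 i)"
  have n: "n \<in> l" unfolding n_def lu by (rule span2_comb) (use x(1) r lu in simp_all)
  have "vec4 b 0 a 1 = n"
    by (rule Vec_eq[OF vec4_Vec Lns_Vec[OF l(1) n]]) (use x2 x3 in \<open>simp_all add: n_def b_def field_simps\<close>)
  with n have "vec4 b 0 a 1 \<in> l" by simp
  then have "l = span2 (vec4 a 1 0 0) (vec4 b 0 a 1)"
    unfolding lu by (intro span2_eq_of_indep lin_indep2_unit[where i=1 and j=3]) (use r lu in simp_all)
  then show ?thesis unfolding Mf_def by blast
qed

lemma line_cases: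
  fixes l :: "(nat \<Rightarrow> 'a::field) set"
  assumes c2: "(2::'a) = 0" and l: "l \<in> Lns" "l \<noteq> l0"
  shows "l \<in> X0 \<or> l \<in> L1 \<or> (\<exists>a b. l = Mf a b)"
proof (cases "l \<in> L1")
  case False
  then obtain p where p: "p \<in> Pts" "p \<subseteq> l" "p \<subseteq> l0" using l unfolding L1_def by auto
  from l0_point_cases[OF p(1,3)] show ?thesis
  proof
    assume "p = p0"
    then show ?thesis using p(2) l unfolding X0_def Xl_def by simp
  next
    assume "\<exists>a. p = span1 (vec4 a 1 0 0)"
    then obtain a where "vec4 a 1 0 0 \<in> l" using p(2) in_span1 by blast
    then show ?thesis using line_through_l0_point[OF c2 l] by blast
  qed
qed simp

text \<open>Y meets every point <(a,1,0,0)> of l0: the q lines of Y meet l0 in q distinct points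
  among these q points.\<close>

lemma Y_contains_Mf:
  fixes Y :: "(nat \<Rightarrow> 'a::{field,finite}) set set"
  assumes c2: "(2::'a) = 0" and Y: "is_Y Y"
  shows "\<exists>b. Mf a b \<in> Y"
proof -
  have YL: "Y \<subseteq> Lns" and cY: "card Y = card (UNIV :: 'a set)"
    and Yp: "\<forall>l\<in>Y. l \<noteq> l0 \<and> l \<inter> l0 \<in> Pts \<and> l \<inter> l0 \<noteq> p0"
    and inj: "inj_on (\<lambda>l. l \<inter> l0) Y" using Y unfolding is_Y_def by auto
  define pt where "pt = (\<lambda>a::'a. span1 (vec4 a 1 0 0))"
  have sub: "(\<lambda>l. l \<inter> l0) ` Y \<subseteq> range pt"
  proof
    fix p assume "p \<in> (\<lambda>l. l \<inter> l0) ` Y"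
    then obtain l where "l \<in> Y" "p = l \<inter> l0" by blast
    then have "p \<in> Pts" "p \<subseteq> l0" "p \<noteq> p0" using Yp by auto
    then show "p \<in> range pt" using l0_point_cases unfolding pt_def by blast
  qed
  have "card (range pt) \<le> card ((\<lambda>l. l \<inter> l0) ` Y)"
    using card_image[OF inj] cY card_image_le[of UNIV pt] by simp
  then have "(\<lambda>l. l \<inter> l0) ` Y = range pt" by (rule card_seteq[OF finite_imageI[OF finite_UNIV] sub])
  then have "pt a \<in> (\<lambda>l. l \<inter> l0) ` Y" by simp
  then obtain y where y: "y \<in> Y" "pt a \<subseteq> y" by blast
  then have "vec4 a 1 0 0 \<in> y" using in_span1 unfolding pt_def by blast
  then show ?thesis using line_through_l0_point[OF c2] y(1) YL Yp by blast
qed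

lemma span_zero: "in_F2_span (\<lambda>p. 0) S"
  unfolding in_F2_span_def by (rule exI[of _ "\<lambda>l. 0"]) simp

lemma span_single:
  assumes "finite S" "l \<in> S"
  shows "in_F2_span (chi l) S"
  unfolding in_F2_span_def
proof (rule exI[of _ "\<lambda>l'. if l' = l then 1 else 0"], intro ballI)
  fix p
  have "(\<Sum>l'\<in>S. (if l' = l then 1 else 0) * chi l' p) = (\<Sum>l'\<in>S. if l' = l then chi l' p else 0)"
    by (rule sum.cong) auto
  also have "\<dots> = chi l p" using assms by simp
  finally show "chi l p = (\<Sum>l'\<in>S. (if l' = l then 1 else 0) * chi l' p)" by simp
qed

lemma span_add:
  fixes f g :: "(nat \<Rightarrow> 'a::field) set \<Rightarrow> bit"
  assumes "in_F2_span f S" "in_F2_span g S"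
  shows "in_F2_span (\<lambda>p. f p + g p) S"
proof -
  obtain c1 c2 where c: "\<forall>p\<in>(Pts::(nat \<Rightarrow> 'a) set set). f p = (\<Sum>l\<in>S. c1 l * chi l p)"
      "\<forall>p\<in>(Pts::(nat \<Rightarrow> 'a) set set). g p = (\<Sum>l\<in>S. c2 l * chi l p)"
    using assms unfolding in_F2_span_def by blast
  show ?thesis unfolding in_F2_span_def
  proof (rule exI[of _ "\<lambda>l. c1 l + c2 l"], intro ballI)
    fix p :: "(nat \<Rightarrow> 'a) set" assume "p \<in> Pts"
    then have "f p + g p = (\<Sum>l\<in>S. c1 l * chi l p) + (\<Sum>l\<in>S. c2 l * chi l p)" using c by simp
    also have "\<dots> = (\<Sum>l\<in>S. (c1 l + c2 l) * chi l p)" by (simp only: distrib_right sum.distrib)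
    finally show "f p + g p = (\<Sum>l\<in>S. (c1 l + c2 l) * chi l p)" .
  qed
qed

lemma span_sum:
  assumes "finite I" "\<And>i. i \<in> I \<Longrightarrow> in_F2_span (f i) S"
  shows "in_F2_span (\<lambda>p. \<Sum>i\<in>I. f i p) S"
  using assms
proof (induction I rule: finite_induct)
  case empty then show ?case by (simp add: span_zero)
next
  case (insert x F)
  have "in_F2_span (\<lambda>p. f x p + (\<Sum>i\<in>F. f i p)) S"
    by (rule span_add) (use insert in auto)
  then show ?case using insert by simp
qed

lemma span_cong:
  assumes "in_F2_span g S" "\<And>p. p \<in> Pts \<Longrightarrow> f p = g p"
  shows "in_F2_span f S"
  using assms unfolding in_F2_span_def by simp

lemma sum_indicator_single:
  assumes "\<And>x. P x \<longleftrightarrow> x = k \<and> Q"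
  shows "(\<Sum>x\<in>(UNIV::'a::finite set). if P x then (1::bit) else 0) = (if Q then 1 else 0)"
  using assms by (cases Q) auto

lemma sum_indicator_unique:
  assumes "\<And>x. P x \<longleftrightarrow> x = k"
  shows "(\<Sum>x\<in>(UNIV::'a::finite set). if P x then (1::bit) else 0) = 1"
  using sum_indicator_single[of P k True] assms by simp

lemma sum_indicator_shift:
  "(\<Sum>x\<in>(UNIV::'a::{ab_group_add,finite} set). if P (x + k) then (1::bit) else 0)
   = (\<Sum>x\<in>UNIV. if P x then 1 else 0)"
  by (rule sum.reindex_bij_betw[of "\<lambda>x. x + k" UNIV UNIV "\<lambda>x. if P x then 1 else 0"])
    (simp add: bij_plus_right)

text \<open>The auxiliary lines of L1 used to pass from Mf a b' to Mf a b, with d = b + b'.\<close>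

definition Lpar :: "'a::field \<Rightarrow> 'a \<Rightarrow> 'a \<Rightarrow> 'a \<Rightarrow> (nat \<Rightarrow> 'a) set" where
  "Lpar a d k z = Lf (d * (z + a * z^2)) (d * z^2) (k + a^2 * d * z^2)"

lemma Lpar_Lns: "Lpar a d k z \<in> Lns"
  unfolding Lpar_def by (rule Lf_Lns)

text \<open>In characteristic 2 the equations of Lpar a d k z and of Mf a b take a form adapted
  to the substitution u = v2 + a v3.\<close>

lemma Lpar_equations:
  fixes a d k z v0 v1 v2 v3 :: "'a::field"
  assumes c2: "(2::'a) = 0"
  shows "(v0 = v2 * (d * (z + a * z^2)) + v3 * (k + a^2 * d * z^2)
          \<and> v1 = v2 * (d * z^2) + v3 * (d * (z + a * z^2)))
     \<longleftrightarrow> v1 = d * ((v2 + a * v3) * z^2 + v3 * z) \<and> v0 + a * v1 = d * (v2 + a * v3) * z + v3 * k"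
    (is "v0 = ?E0 \<and> v1 = ?E1 \<longleftrightarrow> _")
proof -
  have "?E0 + a * ?E1 = d * (v2 + a * v3) * z + v3 * k + 2 * (a * v2 * d * z^2 + a^2 * v3 * d * z^2)"
    by (simp add: algebra_simps power2_eq_square mult_2)
  then have E0: "?E0 + a * ?E1 = d * (v2 + a * v3) * z + v3 * k" using c2 by simp
  have E1: "?E1 = d * ((v2 + a * v3) * z^2 + v3 * z)" by (simp add: algebra_simps)
  have "v0 = ?E0 \<and> v1 = ?E1 \<longleftrightarrow> v1 = ?E1 \<and> v0 + a * v1 = ?E0 + a * ?E1" by auto
  then show ?thesis by (simp only: E0) (simp only: E1)
qed

lemma Mf_equations:
  fixes a b v0 v1 v2 v3 :: "'a::field"
  assumes c2: "(2::'a) = 0"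
  shows "(v0 = v1 * a + v3 * b \<and> v2 = v3 * a) \<longleftrightarrow> v2 + a * v3 = 0 \<and> v0 + a * v1 = v3 * b"
  unfolding eq_iff_sum_zero[OF c2, of v2] eq_iff_sum_zero[OF c2, of v0]
    eq_iff_sum_zero[OF c2, of "v0 + a * v1"]
  by (auto simp: algebra_simps)

lemma mem_Lpar:
  fixes a :: "'a::field"
  assumes c2: "(2::'a) = 0" and v: "v \<in> Vec"
  shows "v \<in> Lpar a d k z \<longleftrightarrow>
    v 1 = d * ((v 2 + a * v 3) * z^2 + v 3 * z) \<and> v 0 + a * v 1 = d * (v 2 + a * v 3) * z + v 3 * k"
  unfolding Lpar_def memL[OF v] by (rule Lpar_equations[OF c2])

lemma mem_Mf_char2:
  fixes a :: "'a::field"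
  assumes c2: "(2::'a) = 0" and v: "v \<in> Vec"
  shows "v \<in> Mf a b \<longleftrightarrow> v 2 + a * v 3 = 0 \<and> v 0 + a * v 1 = v 3 * b"
  unfolding memM[OF v] by (rule Mf_equations[OF c2])

text \<open>The key parity identity, in the coordinates v0..v3 of a vector: modulo 2, the lines
  Mf a b and Mf a b' differ by the lines Lpar a (b+b') b z and Lpar a (b+b') b' z, z ranging
  over the field.  If u = v2 + a v3 \<noteq> 0, the substitution z \<mapsto> z + v3/u matches the two sums;
  otherwise each sum has at most one term, equal to the corresponding Mf indicator.\<close>

lemma parity_Mf_change:
  fixes a b b' v0 v1 v2 v3 :: "'a::{field,finite}"
  assumes c2: "(2::'a) = 0" and ne: "b \<noteq> b'"
  shows "(if v2 + a * v3 = 0 \<and> v0 + a * v1 = v3 * b then 1 else 0 :: bit)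
     = (if v2 + a * v3 = 0 \<and> v0 + a * v1 = v3 * b' then 1 else 0)
     + (\<Sum>z\<in>UNIV. if v1 = (b + b') * ((v2 + a * v3) * z^2 + v3 * z)
                    \<and> v0 + a * v1 = (b + b') * (v2 + a * v3) * z + v3 * b then 1 else 0)
     + (\<Sum>z\<in>UNIV. if v1 = (b + b') * ((v2 + a * v3) * z^2 + v3 * z)
                    \<and> v0 + a * v1 = (b + b') * (v2 + a * v3) * z + v3 * b' then 1 else 0)"
proof -
  define d where "d = b + b'"
  define u where "u = v2 + a * v3"
  have d: "d \<noteq> 0" using ne eq_iff_sum_zero[OF c2, of b b'] unfolding d_def by simp
  have two: "2 * x = 0" for x :: 'a using c2 by simp
  let ?P = "\<lambda>k z. v1 = d * (u * z^2 + v3 * z) \<and> v0 + a * v1 = d * u * z + v3 * k"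
  have "(if u = 0 \<and> v0 + a * v1 = v3 * b then 1 else 0 :: bit)
     = (if u = 0 \<and> v0 + a * v1 = v3 * b' then 1 else 0)
     + (\<Sum>z\<in>UNIV. if ?P b z then 1 else 0) + (\<Sum>z\<in>UNIV. if ?P b' z then 1 else 0)"
  proof (cases "u = 0")
    case False
    define s where "s = v3 / u"
    have "u * (z + s)^2 + v3 * (z + s) = u * z^2 + v3 * z + 2 * (u * z * s + v3 * s)" for z
      using False by (simp add: s_def algebra_simps power2_eq_square mult_2)
    moreover have "d * u * (z + s) + v3 * b' = d * u * z + v3 * b + 2 * (v3 * b')" for z
      using False by (simp add: s_def d_def algebra_simps mult_2)
    ultimately have "?P b' (z + s) \<longleftrightarrow> ?P b z" for z using two by simp
    then have "(\<Sum>z\<in>UNIV. if ?P b' z then 1 else (0::bit)) = (\<Sum>z\<in>UNIV. if ?P b z then 1 else 0)"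
      using sum_indicator_shift[of "?P b'" s] by simp
    then show ?thesis using False by simp
  next
    case True
    show ?thesis
    proof (cases "v3 = 0")
      case False
      have "?P k z \<longleftrightarrow> z = v1 / (d * v3) \<and> v0 + a * v1 = v3 * k" for k z
        using True False d by (auto simp: field_simps)
      then show ?thesis using True by (simp add: sum_indicator_single)
    next
      case True
      then show ?thesis using \<open>u = 0\<close> by simp
    qed
  qed
  then show ?thesis unfolding u_def d_def .
qed

lemma chi_Mf_in_span:
  fixes S :: "(nat \<Rightarrow> 'a::{field,finite}) set set"
  assumes c2: "(2::'a) = 0" and S: "finite S" "\<And>a b c. Lf a b c \<in> S" "Mf a b' \<in> S"
  shows "in_F2_span (chi (Mf a b)) S"
proof (cases "b = b'")
  case False
  have "in_F2_span (\<lambda>p. chi (Mf a b') p + (\<Sum>z\<in>UNIV. chi (Lpar a (b + b') b z) p)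
      + (\<Sum>z\<in>UNIV. chi (Lpar a (b + b') b' z) p)) S"
    by (intro span_add span_sum span_single) (auto simp: S Lpar_def)
  then show ?thesis
  proof (rule span_cong)
    fix p :: "(nat \<Rightarrow> 'a) set" assume "p \<in> Pts"
    then obtain v where v: "p = span1 v" "v \<in> Vec" by (rule Pts_E)
    show "chi (Mf a b) p = chi (Mf a b') p + (\<Sum>z\<in>UNIV. chi (Lpar a (b + b') b z) p)
      + (\<Sum>z\<in>UNIV. chi (Lpar a (b + b') b' z) p)"
      unfolding v(1) chi_line[OF Mf_Lns[OF c2]] chi_line[OF Lpar_Lns]
        mem_Mf_char2[OF c2 v(2)] mem_Lpar[OF c2 v(2)]
      by (rule parity_Mf_change[OF c2 False])
  qed
qed (use S in \<open>simp add: span_single\<close>)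

lemma parity_one:
  fixes v0 v1 v2 v3 :: "'a::{field,finite}"
  assumes qe: "of_nat (card (UNIV::'a set)) = (0::bit)"
  shows "(1::bit) = (\<Sum>a\<in>UNIV. \<Sum>c\<in>UNIV. if v0 = v2 * a + v3 * c \<and> v1 = v2 * 0 + v3 * a then 1 else 0)
    + (\<Sum>a\<in>UNIV. if v0 = v2 * a + v3 * 0 \<and> v1 = v2 * 0 + v3 * a then 1 else 0)
    + (\<Sum>b\<in>UNIV. if v1 = v2 * b \<and> v3 = 0 then 1 else 0) + (if v1 = v2 * 0 \<and> v3 = 0 then 1 else 0)
    + (\<Sum>s\<in>UNIV. if v0 = v1 * s + v3 * 0 \<and> v2 = v3 * s then 1 else 0)"
proof -
  have const: "(\<Sum>x\<in>(UNIV::'a set). c) = 0" for c :: bit using qe by simp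
  consider "v3 \<noteq> 0" | "v3 = 0" "v2 \<noteq> 0" | "v3 = 0" "v2 = 0" "v1 \<noteq> 0" | "v3 = 0" "v2 = 0" "v1 = 0"
    by blast
  then show ?thesis
  proof cases
    case 1
    have "(\<Sum>c\<in>UNIV. if v0 = v2 * a + v3 * c \<and> v1 = v2 * 0 + v3 * a then 1 else 0)
        = (if v1 = v3 * a then 1 else (0::bit))" for a
      by (rule sum_indicator_single[where k = "(v0 - v2 * a) / v3"]) (use 1 in \<open>auto simp: field_simps\<close>)
    moreover have "(\<Sum>a\<in>UNIV. if v1 = v3 * a then 1 else (0::bit)) = 1"
      by (rule sum_indicator_unique[where k = "v1 / v3"]) (use 1 in \<open>auto simp: field_simps\<close>)
    moreover have "(\<Sum>a\<in>UNIV. if v0 = v2 * a + v3 * 0 \<and> v1 = v2 * 0 + v3 * a then 1 else 0)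
        = (if v0 = v2 * (v1 / v3) then 1 else (0::bit))"
      by (rule sum_indicator_single[where k = "v1 / v3"]) (use 1 in \<open>auto simp: field_simps\<close>)
    moreover have "(\<Sum>s\<in>UNIV. if v0 = v1 * s + v3 * 0 \<and> v2 = v3 * s then 1 else 0)
        = (if v0 = v2 * (v1 / v3) then 1 else (0::bit))"
      by (rule sum_indicator_single[where k = "v2 / v3"]) (use 1 in \<open>auto simp: field_simps\<close>)
    ultimately show ?thesis using 1 by simp
  next
    case 2
    have "(\<Sum>a\<in>UNIV. if v0 = v2 * a + v3 * 0 \<and> v1 = v2 * 0 + v3 * a then 1 else 0)
        = (if v1 = 0 then 1 else (0::bit))"
      by (rule sum_indicator_single[where k = "v0 / v2"]) (use 2 in \<open>auto simp: field_simps\<close>)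
    moreover have "(\<Sum>b\<in>UNIV. if v1 = v2 * b \<and> v3 = 0 then 1 else (0::bit)) = 1"
      by (rule sum_indicator_unique[where k = "v1 / v2"]) (use 2 in \<open>auto simp: field_simps\<close>)
    moreover have "(\<Sum>a\<in>UNIV. \<Sum>c\<in>UNIV. if v0 = v2 * a + v3 * c \<and> v1 = v2 * 0 + v3 * a then 1 else 0)
        = (0::bit)"
      by (simp only: 2(1) mult_zero_left mult_zero_right add_0_right const sum.neutral_const)
    ultimately show ?thesis using 2 const by simp
  next
    case 3
    have "(\<Sum>s\<in>UNIV. if v0 = v1 * s + v3 * 0 \<and> v2 = v3 * s then 1 else (0::bit)) = 1"
      by (rule sum_indicator_unique[where k = "v0 / v1"]) (use 3 in \<open>auto simp: field_simps\<close>)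
    then show ?thesis using 3 const by simp
  next
    case 4
    then show ?thesis using qe by simp
  qed
qed

lemma one_in_span:
  fixes S :: "(nat \<Rightarrow> 'a::{field,finite}) set set"
  assumes c2: "(2::'a) = 0" and qe: "of_nat (card (UNIV::'a set)) = (0::bit)" and S: "finite S"
    and Ls: "\<And>a b c. Lf a b c \<in> S" and Xs: "\<And>b. Xf b \<in> S"
    and Ms: "\<And>a b. in_F2_span (chi (Mf a b)) S"
  shows "in_F2_span (\<lambda>p. 1) S"
proof -
  have "in_F2_span (\<lambda>p. (\<Sum>a\<in>UNIV. \<Sum>c\<in>UNIV. chi (Lf a 0 c) p) + (\<Sum>a\<in>UNIV. chi (Lf a 0 0) p)
     + (\<Sum>b\<in>UNIV. chi (Xf b) p) + chi (Xf 0) p + (\<Sum>s\<in>UNIV. chi (Mf s 0) p)) S"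
    by (intro span_add span_sum span_single Ms) (auto simp: S Ls Xs)
  then show ?thesis
  proof (rule span_cong)
    fix p :: "(nat \<Rightarrow> 'a) set" assume "p \<in> Pts"
    then obtain v where v: "p = span1 v" "v \<in> Vec" by (rule Pts_E)
    show "(1::bit) = (\<Sum>a\<in>UNIV. \<Sum>c\<in>UNIV. chi (Lf a 0 c) p) + (\<Sum>a\<in>UNIV. chi (Lf a 0 0) p)
     + (\<Sum>b\<in>UNIV. chi (Xf b) p) + chi (Xf 0) p + (\<Sum>s\<in>UNIV. chi (Mf s 0) p)"
      unfolding v(1) chi_line[OF Lf_Lns] chi_line[OF Xf_Lns] chi_line[OF Mf_Lns[OF c2]]
        memL[OF v(2)] memX[OF v(2)] memM[OF v(2)]
      by (rule parity_one[OF qe])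
  qed
qed

theorem lemma6:
  fixes Y :: "(nat \<Rightarrow> 'a::{field,finite}) set set"
    and t :: nat
  assumes "card (UNIV :: 'a set) = 2 ^ t"
    and "is_Y Y"
  shows "(\<forall>l\<in>Lns - {l0}. in_F2_span (chi l) (X0 \<union> Y \<union> L1))
       \<and> in_F2_span (\<lambda>p. 1) (X0 \<union> Y \<union> L1)"
proof -
  define S where "S = X0 \<union> Y \<union> L1"
  have c2: "(2::'a) = 0" using char_two[OF assms(1)] .
  have "S \<subseteq> Lns" using assms(2) unfolding S_def X0_def Xl_def L1_def is_Y_def by auto
  then have S: "finite S" using finite_Lns finite_subset by blast
  have Ls: "Lf a b c \<in> S" for a b c using Lf_in_L1[of a b c] unfolding S_def by blast
  have Xs: "Xf b \<in> S" for b using Xf_in_X0[of b] unfolding S_def by blast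
  have Ms: "in_F2_span (chi (Mf a b)) S" for a b
  proof -
    obtain b' where "Mf a b' \<in> S" using Y_contains_Mf[OF c2 assms(2)] unfolding S_def by blast
    then show ?thesis using chi_Mf_in_span[OF c2 S Ls] by blast
  qed
  have "in_F2_span (chi l) S" if "l \<in> Lns - {l0}" for l
    using line_cases[OF c2, of l] that span_single[OF S, of l] Ms unfolding S_def by auto
  moreover have "in_F2_span (\<lambda>p. 1) S"
    using one_in_span[OF c2 card_even_in_bit[OF assms(1)] S Ls Xs Ms] .
  ultimately show ?thesis unfolding S_def by blast
qed

end
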